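(* Let $P$ be a finite $\vee$-semilattice, $K\subseteq P$ any subset, and $A\in\mathbb{R}$. Then $\kappa:P\to\mathbb{R}$, $\kappa(x)=A-|\{k\in K: x\le k\}|$, is an isotone upper valuation on $P$.
   Context: For a poset $(P,\le)$ and $x\in P$: $\downarrow x=\{x'\in P: x'\le x\}$, $\uparrow x=\{x'\in P: x\le x'\}$. A function $f:P\to\mathbb{R}$ is isotone if $x\le y\Rightarrow f(x)\le f(y)$. For an isotone $f$ and $x,y\in P$ define $f^-(x,y)=\sup\{f(z):z\in\downarrow x\cap\downarrow y\}$ and $f^+(x,y)=\inf\{f(z):z\in\uparrow x\cap\uparrow y\}$, with $\inf\emptyset=+\infty$, $\sup\emptyset=-\infty$. An isotone $v:P\to\mathbb{R}$ is an upper valuation if $\uparrow x\cap\uparrow y\neq\emptyset$ for all $x,y\in P$ and $v^-(x,y)+v^+(x,y)\le v(x)+v(y)$ for all $x,y\in P$. *)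

theory Defs
  imports Main "HOL-Library.Extended_Real"
begin

definition isotone :: "('a::order \<Rightarrow> real) \<Rightarrow> bool" where
  "isotone f \<longleftrightarrow> (\<forall>x y. x \<le> y \<longrightarrow> f x \<le> f y)"

text \<open>f^-(x,y) = sup of f over the common lower bounds (sup of empty set = -infinity).\<close>
definition fminus :: "('a::order \<Rightarrow> real) \<Rightarrow> 'a \<Rightarrow> 'a \<Rightarrow> ereal" where
  "fminus f x y = Sup ((\<lambda>z. ereal (f z)) ` {z. z \<le> x \<and> z \<le> y})"

text \<open>f^+(x,y) = inf of f over the common upper bounds (inf of empty set = +infinity).\<close>
definition fplus :: "('a::order \<Rightarrow> real) \<Rightarrow> 'a \<Rightarrow> 'a \<Rightarrow> ereal" where
  "fplus f x y = Inf ((\<lambda>z. ereal (f z)) ` {z. x \<le> z \<and> y \<le> z})"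

definition upper_valuation :: "('a::order \<Rightarrow> real) \<Rightarrow> bool" where
  "upper_valuation v \<longleftrightarrow> isotone v \<and>
     (\<forall>x y. \<exists>z. (x::'a) \<le> z \<and> y \<le> z) \<and>
     (\<forall>x y. fminus v x y + fplus v x y \<le> ereal (v x) + ereal (v y))"

end

theory Submission
  imports Defs
begin

text \<open>
  In a join-semilattice the join \<open>sup x y\<close> is a common upper bound of
  \<open>x\<close> and \<open>y\<close>, so \<open>fplus v x y \<le> v (sup x y)\<close>.  Hence an isotone \<open>v\<close> is an upper
  valuation as soon as \<open>v z + v (sup x y) \<le> v x + v y\<close> holds for every common
  lower bound \<open>z\<close> of \<open>x\<close> and \<open>y\<close>; this criterion is proved first.

  For \<kappa>(x) = A - c(x), with c(x) the number of \<open>k \<in> K\<close> above \<open>x\<close>, the criterion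
  reads \<open>c x + c y \<le> c z + c (sup x y)\<close>.  This follows from inclusion-exclusion:
  the elements of \<open>K\<close> above both \<open>x\<close> and \<open>y\<close> are exactly those above \<open>sup x y\<close>,
  and those above \<open>x\<close> or \<open>y\<close> all lie above \<open>z\<close>.  Antitonicity of \<open>c\<close> gives
  isotonicity of \<kappa>.
\<close>

lemma fplus_le_sup:
  fixes v :: "'a::semilattice_sup \<Rightarrow> real"
  shows "fplus v x y \<le> ereal (v (sup x y))"
  unfolding fplus_def by (rule Inf_lower) auto

lemma fminus_le:
  fixes v :: "'a::order \<Rightarrow> real"
  assumes "\<And>z. z \<le> x \<Longrightarrow> z \<le> y \<Longrightarrow> v z \<le> b"
  shows "fminus v x y \<le> ereal b"
  unfolding fminus_def using assms by (auto intro!: Sup_least)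

lemma upper_valuation_semilattice:
  fixes v :: "'a::semilattice_sup \<Rightarrow> real"
  assumes iso: "isotone v"
    and bound: "\<And>x y z. z \<le> x \<Longrightarrow> z \<le> y \<Longrightarrow> v z + v (sup x y) \<le> v x + v y"
  shows "upper_valuation v"
proof -
  have "fminus v x y + fplus v x y \<le> ereal (v x) + ereal (v y)" for x y
  proof -
    have "fminus v x y \<le> ereal (v x + v y - v (sup x y))"
      by (rule fminus_le) (use bound in fastforce)
    hence "fminus v x y + fplus v x y \<le> ereal (v x + v y - v (sup x y)) + ereal (v (sup x y))"
      using fplus_le_sup by (rule add_mono)
    thus ?thesis by simp
  qed
  moreover have "\<forall>x y. \<exists>z. (x::'a) \<le> z \<and> y \<le> z"
    by (meson sup_ge1 sup_ge2)
  ultimately show ?thesis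
    using iso unfolding upper_valuation_def by blast
qed

lemma card_above_antitone:
  fixes K :: "'a::order set"
  assumes "finite K" "x \<le> y"
  shows "card {k \<in> K. y \<le> k} \<le> card {k \<in> K. x \<le> k}"
  using assms by (intro card_mono) (auto intro: order_trans)

text \<open>The counting function is supermodular in the sense needed by the criterion:
  \<open>c x + c y = c(above x or y) + c(above sup x y) \<le> c z + c (sup x y)\<close>.\<close>
lemma card_above_sup_bound:
  fixes K :: "'a::semilattice_sup set"
  assumes "finite K" "z \<le> x" "z \<le> y"
  shows "card {k \<in> K. x \<le> k} + card {k \<in> K. y \<le> k}
         \<le> card {k \<in> K. z \<le> k} + card {k \<in> K. sup x y \<le> k}"
proof -
  let ?S = "{k \<in> K. x \<le> k}" and ?T = "{k \<in> K. y \<le> k}"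
  have "card ?S + card ?T = card (?S \<union> ?T) + card (?S \<inter> ?T)"
    using \<open>finite K\<close> by (intro card_Un_Int) auto
  also have "?S \<inter> ?T = {k \<in> K. sup x y \<le> k}"
    by auto
  also have "card (?S \<union> ?T) \<le> card {k \<in> K. z \<le> k}"
    using assms by (intro card_mono) (auto intro: order_trans)
  finally show ?thesis by simp
qed

theorem mainTheorem6:
  fixes K :: "('a::{semilattice_sup, finite}) set" and A :: real
  shows "isotone (\<lambda>x. A - real (card {k \<in> K. x \<le> k})) \<and>
         upper_valuation (\<lambda>x. A - real (card {k \<in> K. x \<le> k}))"
proof -
  define \<kappa> where "\<kappa> = (\<lambda>x::'a. A - real (card {k \<in> K. x \<le> k}))"
  have fin: "finite K" by simp
  have iso: "isotone \<kappa>"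
    unfolding isotone_def \<kappa>_def using card_above_antitone[OF fin] by fastforce
  have "\<kappa> z + \<kappa> (sup x y) \<le> \<kappa> x + \<kappa> y" if "z \<le> x" "z \<le> y" for x y z
    using card_above_sup_bound[OF fin that] unfolding \<kappa>_def by simp
  with iso have "upper_valuation \<kappa>"
    by (rule upper_valuation_semilattice)
  with iso show ?thesis
    unfolding \<kappa>_def by simp
qed

end
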